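(* Let $(N,C,\mathbf{A},k)$ be an instance with $|N|=n$ having at least one cohesive group, and let $c_{\max}$ be its maximum EJR degree. For every $\lambda\in[0,\frac{n}{k^2})$ satisfying $n>k(k+1)(c_{\max}-1)+\lambda k^2$, every committee output by $\lambda$-LS-PAV (from any initial committee) has EJR degree $c_{\max}$.
   Context: An instance consists of voters $N=\{1,\dots,n\}$, candidates $C$, approval ballots $A_i\subseteq C$ for $i\in N$, and a committee size $k$ with $1\le k\le|C|$. For $\ell\in\mathbb{N}$, $N'\subseteq N$ is an $\ell$-cohesive group if $|N'|\ge\ell n/k$ and $|\bigcap_{i\in N'}A_i|\ge\ell$ (a cohesive group is a $1$-cohesive group). A size-$k$ committee $W$ achieves EJR degree $c$ if for every $\ell\in\{1,\dots,k\}$ every $\ell$-cohesive group contains at least $c$ voters $i$ with $|A_i\cap W|\ge\ell$; its EJR degree is the largest such $c$, and the maximum EJR degree of the instance is the maximum over all size-$k$ committees. The PAV-score of $W$ is $s_{\mathrm{PAV}}(W)=\sum_{i=1}^n\sum_{j=1}^{|A_i\cap W|}\frac1j$, and $\Delta(W,c^+,c^-)=s_{\mathrm{PAV}}((W\setminus\{c^-\})\cup\{c^+\})-s_{\mathrm{PAV}}(W)$. The algorithm $\lambda$-LS-PAV starts from an arbitrary size-$k$ committee $W$ and, while there exist $c^+\notin W$ and $c^-\in W$ with $\Delta(W,c^+,c^-)\ge\lambda$, replaces $W$ by $(W\setminus\{c^-\})\cup\{c^+\}$; it then outputs $W$. *)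

theory Defs
  imports Complex_Main
begin

definition valid_instance :: "nat \<Rightarrow> 'c set \<Rightarrow> (nat \<Rightarrow> 'c set) \<Rightarrow> nat \<Rightarrow> bool" where
  "valid_instance n C A k \<longleftrightarrow> finite C \<and> (\<forall>i\<in>{1..n}. A i \<subseteq> C) \<and> 1 \<le> k \<and> k \<le> card C"

definition committee :: "'c set \<Rightarrow> nat \<Rightarrow> 'c set \<Rightarrow> bool" where
  "committee C k W \<longleftrightarrow> W \<subseteq> C \<and> card W = k"

definition cohesive_group :: "nat \<Rightarrow> (nat \<Rightarrow> 'c set) \<Rightarrow> nat \<Rightarrow> nat \<Rightarrow> nat set \<Rightarrow> bool" where
  "cohesive_group n A k l N' \<longleftrightarrow>
     N' \<subseteq> {1..n} \<and> N' \<noteq> {} \<and>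
     real (card N') \<ge> real l * real n / real k \<and>
     card (\<Inter>i\<in>N'. A i) \<ge> l"

definition achieves_ejr_degree :: "nat \<Rightarrow> (nat \<Rightarrow> 'c set) \<Rightarrow> nat \<Rightarrow> 'c set \<Rightarrow> nat \<Rightarrow> bool" where
  "achieves_ejr_degree n A k W c \<longleftrightarrow>
     (\<forall>l\<in>{1..k}. \<forall>N'. cohesive_group n A k l N' \<longrightarrow>
        card {i\<in>N'. card (A i \<inter> W) \<ge> l} \<ge> c)"

definition ejr_degree :: "nat \<Rightarrow> (nat \<Rightarrow> 'c set) \<Rightarrow> nat \<Rightarrow> 'c set \<Rightarrow> nat" where
  "ejr_degree n A k W = (GREATEST c. achieves_ejr_degree n A k W c)"

definition max_ejr_degree :: "nat \<Rightarrow> 'c set \<Rightarrow> (nat \<Rightarrow> 'c set) \<Rightarrow> nat \<Rightarrow> nat" where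
  "max_ejr_degree n C A k = Max {ejr_degree n A k W | W. committee C k W}"

definition pav_score :: "nat \<Rightarrow> (nat \<Rightarrow> 'c set) \<Rightarrow> 'c set \<Rightarrow> real" where
  "pav_score n A W = (\<Sum>i\<in>{1..n}. \<Sum>j\<in>{1..card (A i \<inter> W)}. 1 / real j)"

definition swap_gain :: "nat \<Rightarrow> (nat \<Rightarrow> 'c set) \<Rightarrow> 'c set \<Rightarrow> 'c \<Rightarrow> 'c \<Rightarrow> real" where
  "swap_gain n A W cp cm = pav_score n A ((W - {cm}) \<union> {cp}) - pav_score n A W"

definition ls_pav_step :: "nat \<Rightarrow> 'c set \<Rightarrow> (nat \<Rightarrow> 'c set) \<Rightarrow> real \<Rightarrow> 'c set \<Rightarrow> 'c set \<Rightarrow> bool" where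
  "ls_pav_step n C A lam W W' \<longleftrightarrow>
     (\<exists>cp\<in>C - W. \<exists>cm\<in>W. swap_gain n A W cp cm \<ge> lam \<and> W' = (W - {cm}) \<union> {cp})"

definition ls_pav_output :: "nat \<Rightarrow> 'c set \<Rightarrow> (nat \<Rightarrow> 'c set) \<Rightarrow> nat \<Rightarrow> real \<Rightarrow> 'c set \<Rightarrow> bool" where
  "ls_pav_output n C A k lam W \<longleftrightarrow>
     (\<exists>W0. committee C k W0 \<and> (ls_pav_step n C A lam)\<^sup>*\<^sup>* W0 W) \<and>
     \<not> (\<exists>W'. ls_pav_step n C A lam W W')"

end

theory Submission
  imports Defs "HOL-Analysis.Harmonic_Numbers"
begin

(* Let W be an output of lam-LS-PAV and suppose some l-cohesive group N' has fewer than
   c_max members with l approved candidates in W. Some committee gives c_max members of N'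
   that much, so N' is not fully satisfied by W; hence some candidate c approved by all of N'
   lies outside W. Summed over the k possible removals, adding c gains at least (k+1)/l - 1
   for each of the at least l n/k - (c_max - 1) unsatisfied members of N' and loses at most
   1 for every voter. Under n > k(k+1)(c_max - 1) + lam k^2 this total exceeds k lam, so
   some swap gains at least lam, contradicting termination. *)

lemma pav_score_eq_sum_harm:
  "pav_score n A W = (\<Sum>i\<in>{1..n}. harm (card (A i \<inter> W)))"
  unfolding pav_score_def harm_def by (simp add: inverse_eq_divide)

lemma harm_card_swap_diff:
  fixes B W :: "'c set"
  assumes fin: "finite W" and c: "c \<notin> W" and d: "d \<in> W"
  defines "t \<equiv> card (B \<inter> W)"
  shows "harm (card (B \<inter> (W - {d} \<union> {c}))) - harm t =
    (if c \<in> B \<and> d \<notin> B then 1 / real (t + 1)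
     else if c \<notin> B \<and> d \<in> B then - 1 / real t else (0::real))"
proof -
  have finBW: "finite (B \<inter> W)" using fin by simp
  consider "c \<in> B" "d \<in> B" | "c \<in> B" "d \<notin> B" | "c \<notin> B" "d \<in> B" | "c \<notin> B" "d \<notin> B"
    by blast
  then show ?thesis
  proof cases
    case 1
    then have "B \<inter> (W - {d} \<union> {c}) = insert c (B \<inter> W - {d})" by auto
    moreover have "card (insert c (B \<inter> W - {d})) = t"
    proof -
      have "d \<in> B \<inter> W" using 1 d by blast
      then have "t > 0" using finBW card_gt_0_iff unfolding t_def by blast
      moreover have "card (insert c (B \<inter> W - {d})) = Suc (t - 1)"
        using c finBW \<open>d \<in> B \<inter> W\<close> unfolding t_def by simp
      ultimately show ?thesis by simp
    qed
    ultimately show ?thesis using 1 by simp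
  next
    case 2
    then have "B \<inter> (W - {d} \<union> {c}) = insert c (B \<inter> W)" by auto
    then show ?thesis using 2 c finBW by (simp add: t_def harm_Suc inverse_eq_divide)
  next
    case 3
    then have t_pos: "t > 0" using d finBW card_gt_0_iff unfolding t_def by blast
    have "B \<inter> (W - {d} \<union> {c}) = B \<inter> W - {d}" using 3 by auto
    then have "card (B \<inter> (W - {d} \<union> {c})) = t - 1" using 3 d unfolding t_def by simp
    moreover have "harm t = harm (t - 1) + 1 / (real t :: real)"
      using harm_Suc[of "t - 1"] t_pos by (simp add: inverse_eq_divide)
    ultimately show ?thesis using 3 by simp
  next
    case 4
    then have "B \<inter> (W - {d} \<union> {c}) = B \<inter> W" using c by auto
    then show ?thesis using 4 by (simp add: t_def)
  qed
qed

lemma sum_harm_card_swap_diff_ge: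
  fixes B W :: "'c set"
  assumes fin: "finite W" and c: "c \<notin> W"
  defines "t \<equiv> card (B \<inter> W)"
  shows "(if c \<in> B then (real (card W) + 1) / real (t + 1) else 0) - 1 \<le>
    (\<Sum>d\<in>W. harm (card (B \<inter> (W - {d} \<union> {c}))) - harm t :: real)"
proof (cases "c \<in> B")
  case True
  have "(\<Sum>d\<in>W. harm (card (B \<inter> (W - {d} \<union> {c}))) - harm t :: real)
      = (\<Sum>d\<in>W. if d \<notin> B then 1 / real (t + 1) else 0)"
  proof (rule sum.cong)
    fix d assume "d \<in> W"
    then show "harm (card (B \<inter> (W - {d} \<union> {c}))) - harm t = (if d \<notin> B then 1 / real (t + 1) else 0)"
      using harm_card_swap_diff[OF fin c \<open>d \<in> W\<close>, of B] True unfolding t_def by simp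
  qed simp
  also have "\<dots> = real (card (W - B)) / real (t + 1)"
    using fin by (simp add: sum.inter_filter[symmetric] set_diff_eq)
  also have "card (W - B) = card W - t"
    using fin by (simp add: t_def card_Diff_subset_Int Int_commute)
  also have "real (card W - t) / real (t + 1) = (real (card W) + 1) / real (t + 1) - 1"
    using card_mono[OF fin, of "B \<inter> W"] by (simp add: t_def field_simps of_nat_diff)
  finally show ?thesis using True by simp
next
  case False
  have "(\<Sum>d\<in>W. harm (card (B \<inter> (W - {d} \<union> {c}))) - harm t :: real)
      = (\<Sum>d\<in>W. if d \<in> B then - 1 / real t else 0)"
  proof (rule sum.cong)
    fix d assume "d \<in> W"
    then show "harm (card (B \<inter> (W - {d} \<union> {c}))) - harm t = (if d \<in> B then - 1 / real t else 0)"
      using harm_card_swap_diff[OF fin c \<open>d \<in> W\<close>, of B] False unfolding t_def by simp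
  qed simp
  also have "\<dots> = - real t / real t"
    using fin by (simp add: sum.inter_filter[symmetric] t_def Int_commute Collect_conj_eq)
  finally show ?thesis using False by simp
qed

lemma sum_swap_gain_eq:
  "(\<Sum>d\<in>W. swap_gain n A W c d) =
   (\<Sum>i\<in>{1..n}. \<Sum>d\<in>W. harm (card (A i \<inter> (W - {d} \<union> {c}))) - harm (card (A i \<inter> W)))"
  unfolding swap_gain_def pav_score_eq_sum_harm sum_subtractf[symmetric] by (rule sum.swap)

lemma sum_swap_gain_ge:
  assumes fin: "finite W" and c: "c \<notin> W" and l: "0 < l" and U: "U \<subseteq> {1..n}"
    and unsatisfied: "\<And>i. i \<in> U \<Longrightarrow> c \<in> A i \<and> card (A i \<inter> W) < l"
  shows "real (card U) * ((real (card W) + 1) / real l) - real n \<le> (\<Sum>d\<in>W. swap_gain n A W c d)"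
proof -
  let ?b = "(real (card W) + 1) / real l"
  have voter_ge: "(if i \<in> U then ?b else 0) - 1 \<le>
      (\<Sum>d\<in>W. harm (card (A i \<inter> (W - {d} \<union> {c}))) - harm (card (A i \<inter> W)))" for i
  proof -
    have "(if i \<in> U then ?b else 0) \<le>
        (if c \<in> A i then (real (card W) + 1) / real (card (A i \<inter> W) + 1) else 0)"
      using unsatisfied[of i] l by (auto intro!: divide_left_mono)
    then show ?thesis using sum_harm_card_swap_diff_ge[OF fin c, of "A i"] by linarith
  qed
  have "real (card U) * ?b - real n = (\<Sum>i\<in>{1..n}. (if i \<in> U then ?b else 0) - 1)"
    using U by (simp add: sum_subtractf sum.If_cases Int_absorb1)
  also have "\<dots> \<le> (\<Sum>i\<in>{1..n}.
      \<Sum>d\<in>W. harm (card (A i \<inter> (W - {d} \<union> {c}))) - harm (card (A i \<inter> W)))"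
    by (rule sum_mono[OF voter_ge])
  also have "\<dots> = (\<Sum>d\<in>W. swap_gain n A W c d)"
    by (rule sum_swap_gain_eq[symmetric])
  finally show ?thesis .
qed

lemma stable_committee_cohesive_group_bound:
  assumes fin: "finite W" and card_W: "card W = k" and k: "0 < k"
    and coh: "cohesive_group n A k l N'" and l: "1 \<le> l"
    and c: "c \<in> (\<Inter>i\<in>N'. A i) - W"
    and stable: "\<And>d. d \<in> W \<Longrightarrow> swap_gain n A W c d < lam"
  shows "real l * (real n - lam * (real k)\<^sup>2)
    < real k * (real k + 1) * real (card {i\<in>N'. l \<le> card (A i \<inter> W)})"
proof -
  define U where "U = {i\<in>N'. card (A i \<inter> W) < l}"
  define S where "S = {i\<in>N'. l \<le> card (A i \<inter> W)}"
  have N': "N' \<subseteq> {1..n}" "real l * real n / real k \<le> real (card N')"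
    using coh unfolding cohesive_group_def by auto
  have U_sub: "U \<subseteq> {1..n}" using N'(1) unfolding U_def by auto
  have "finite N'" using N'(1) finite_subset by blast
  then have "card (U \<union> S) = card U + card S"
    by (intro card_Un_disjoint) (auto simp: U_def S_def)
  moreover have "U \<union> S = N'" unfolding U_def S_def by auto
  ultimately have U_ge: "real l * real n / real k - real (card S) \<le> real (card U)"
    using N'(2) by simp
  have "\<And>i. i \<in> U \<Longrightarrow> c \<in> A i \<and> card (A i \<inter> W) < l" using c unfolding U_def by auto
  then have "real (card U) * ((real k + 1) / real l) - real n \<le> (\<Sum>d\<in>W. swap_gain n A W c d)"
    using sum_swap_gain_ge[OF fin _ _ U_sub] c l card_W by simp
  also have "\<dots> < (\<Sum>d\<in>W. lam)"
    using fin k card_W stable by (intro sum_strict_mono) auto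
  also have "\<dots> = lam * real k" using card_W by simp
  finally have "real (card U) * (real k + 1) < real l * (real n + lam * real k)"
    using l by (simp add: field_simps)
  then have "(real l * real n / real k - real (card S)) * (real k + 1) < real l * (real n + lam * real k)"
    using mult_right_mono[OF U_ge, of "real k + 1"] by linarith
  then show ?thesis using k by (simp add: S_def field_simps power2_eq_square)
qed

lemma cohesive_group_satisfied_if_common_approvals_elected:
  assumes "finite W" and "cohesive_group n A k l N'" and "(\<Inter>i\<in>N'. A i) \<subseteq> W"
  shows "{i\<in>N'. l \<le> card (A i \<inter> W)} = N'"
proof -
  have "l \<le> card (A i \<inter> W)" if "i \<in> N'" for i
  proof -
    have "(\<Inter>i\<in>N'. A i) \<subseteq> A i \<inter> W" using assms(3) that by blast
    then have "card (\<Inter>i\<in>N'. A i) \<le> card (A i \<inter> W)" using assms(1) by (intro card_mono) auto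
    then show ?thesis using assms(2) unfolding cohesive_group_def by linarith
  qed
  then show ?thesis by blast
qed

lemma stable_committee_achieves_ejr_degree:
  assumes inst: "valid_instance n C A k" and W: "committee C k W"
    and stable: "\<And>cp d. cp \<in> C - W \<Longrightarrow> d \<in> W \<Longrightarrow> swap_gain n A W cp d < lam"
    and large: "real n > real k * (real k + 1) * (real c - 1) + lam * (real k)\<^sup>2"
    and other: "achieves_ejr_degree n A k W' c"
  shows "achieves_ejr_degree n A k W c"
  unfolding achieves_ejr_degree_def
proof (intro ballI allI impI)
  fix l N' assume l: "l \<in> {1..k}" and coh: "cohesive_group n A k l N'"
  define s where "s = card {i\<in>N'. l \<le> card (A i \<inter> W)}"
  have "W \<subseteq> C" and card_W: "card W = k" using W unfolding committee_def by auto
  moreover have "finite C" and k: "0 < k" using inst unfolding valid_instance_def by auto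
  ultimately have fin_W: "finite W" using finite_subset by blast
  have fin_N': "finite N'" using coh finite_subset unfolding cohesive_group_def by blast
  have "c \<le> card {i\<in>N'. l \<le> card (A i \<inter> W')}"
    using other l coh unfolding achieves_ejr_degree_def by blast
  also have "\<dots> \<le> card N'" using fin_N' by (intro card_mono) auto
  finally have c_le: "c \<le> card N'" .
  have "c \<le> s"
  proof (cases "(\<Inter>i\<in>N'. A i) \<subseteq> W")
    case True
    then have "s = card N'" unfolding s_def
      using cohesive_group_satisfied_if_common_approvals_elected[OF fin_W coh] by simp
    then show ?thesis using c_le by simp
  next
    case False
    then obtain cp where cp: "cp \<in> (\<Inter>i\<in>N'. A i) - W" by blast
    have "cp \<in> C" using cp coh inst unfolding cohesive_group_def valid_instance_def by blast
    then have bound: "real l * (real n - lam * (real k)\<^sup>2) < real k * (real k + 1) * real s"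
      unfolding s_def using stable_committee_cohesive_group_bound[OF fin_W card_W k coh _ cp] l stable cp
      by auto
    show ?thesis
    proof (rule ccontr)
      assume "\<not> c \<le> s"
      then have "real s \<le> real c - 1" by linarith
      then have "real k * (real k + 1) * real s \<le> real k * (real k + 1) * (real c - 1)"
        by (intro mult_left_mono) auto
      also have "\<dots> < real n - lam * (real k)\<^sup>2" using large by linarith
      also have "\<dots> \<le> real l * (real n - lam * (real k)\<^sup>2)"
      proof -
        have "0 \<le> real k * (real k + 1) * (real c - 1)" using \<open>\<not> c \<le> s\<close> by simp
        then have "0 \<le> real n - lam * (real k)\<^sup>2" using large by linarith
        then show ?thesis using mult_right_mono[of 1 "real l" "real n - lam * (real k)\<^sup>2"] l by simp
      qed
      finally show False using bound by simp
    qed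
  qed
  then show "c \<le> card {i\<in>N'. l \<le> card (A i \<inter> W)}" unfolding s_def .
qed

lemma achieves_ejr_degree_antimono:
  assumes "achieves_ejr_degree n A k W c" and "c' \<le> c"
  shows "achieves_ejr_degree n A k W c'"
  unfolding achieves_ejr_degree_def
proof (intro ballI allI impI)
  fix l N' assume "l \<in> {1..k}" and "cohesive_group n A k l N'"
  then have "c \<le> card {i\<in>N'. l \<le> card (A i \<inter> W)}"
    using assms(1) unfolding achieves_ejr_degree_def by blast
  then show "c' \<le> card {i\<in>N'. l \<le> card (A i \<inter> W)}" using assms(2) by simp
qed

lemma achieves_ejr_degree_iff_le_ejr_degree:
  assumes coh: "cohesive_group n A k 1 N'" and k: "1 \<le> k"
  shows "achieves_ejr_degree n A k W c \<longleftrightarrow> c \<le> ejr_degree n A k W"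
proof -
  have bounded: "c \<le> card N'" if "achieves_ejr_degree n A k W c" for c
  proof -
    have "finite N'" using coh finite_subset unfolding cohesive_group_def by blast
    have "c \<le> card {i\<in>N'. 1 \<le> card (A i \<inter> W)}"
      using that coh k unfolding achieves_ejr_degree_def by simp
    also have "\<dots> \<le> card N'" using \<open>finite N'\<close> by (intro card_mono) auto
    finally show ?thesis .
  qed
  have zero: "achieves_ejr_degree n A k W 0" unfolding achieves_ejr_degree_def by simp
  show ?thesis
  proof
    assume "achieves_ejr_degree n A k W c"
    then show "c \<le> ejr_degree n A k W"
      unfolding ejr_degree_def by (rule Greatest_le_nat) (rule bounded)
  next
    assume "c \<le> ejr_degree n A k W"
    moreover have "achieves_ejr_degree n A k W (ejr_degree n A k W)"
      unfolding ejr_degree_def using zero by (rule GreatestI_nat) (rule bounded)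
    ultimately show "achieves_ejr_degree n A k W c" by (rule achieves_ejr_degree_antimono[rotated])
  qed
qed

lemma finite_ejr_degrees_of_committees:
  "finite C \<Longrightarrow> finite {ejr_degree n A k W | W. committee C k W}"
  by (rule finite_subset[where B = "ejr_degree n A k ` Pow C"]) (auto simp: committee_def)

lemma ejr_degree_le_max_ejr_degree:
  "finite C \<Longrightarrow> committee C k W \<Longrightarrow> ejr_degree n A k W \<le> max_ejr_degree n C A k"
  unfolding max_ejr_degree_def by (intro Max_ge finite_ejr_degrees_of_committees) auto

lemma max_ejr_degree_attained:
  assumes "finite C" and "committee C k W"
  obtains W' where "committee C k W'" and "ejr_degree n A k W' = max_ejr_degree n C A k"
proof -
  have "max_ejr_degree n C A k \<in> {ejr_degree n A k W | W. committee C k W}"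
    unfolding max_ejr_degree_def using assms by (intro Max_in finite_ejr_degrees_of_committees) auto
  then show ?thesis using that by auto
qed

lemma ls_pav_step_committee:
  assumes "ls_pav_step n C A lam W W'" and "committee C k W" and "finite C"
  shows "committee C k W'"
proof -
  obtain cp d where cp: "cp \<in> C - W" and d: "d \<in> W" and W': "W' = W - {d} \<union> {cp}"
    using assms(1) unfolding ls_pav_step_def by blast
  have "finite W" using assms(2,3) finite_subset unfolding committee_def by blast
  moreover have "0 < card W" using d \<open>finite W\<close> card_gt_0_iff by blast
  ultimately have "card W' = card W" using cp d W' by simp
  moreover have "W' \<subseteq> C" using W' cp d assms(2) unfolding committee_def by blast
  ultimately show ?thesis using assms(2) unfolding committee_def by simp
qed

lemma ls_pav_output_committee:
  assumes "valid_instance n C A k" and "ls_pav_output n C A k lam W"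
  shows "committee C k W"
proof -
  obtain W0 where W0: "committee C k W0" and steps: "(ls_pav_step n C A lam)\<^sup>*\<^sup>* W0 W"
    using assms(2) unfolding ls_pav_output_def by blast
  have "finite C" using assms(1) unfolding valid_instance_def by blast
  from steps W0 show ?thesis
    by (induction rule: rtranclp_induct) (auto intro: ls_pav_step_committee[OF _ _ \<open>finite C\<close>])
qed

lemma ls_pav_output_stable:
  assumes "ls_pav_output n C A k lam W" and "cp \<in> C - W" and "d \<in> W"
  shows "swap_gain n A W cp d < lam"
proof (rule ccontr)
  assume "\<not> ?thesis"
  then have "ls_pav_step n C A lam W (W - {d} \<union> {cp})"
    using assms(2,3) unfolding ls_pav_step_def by force
  then show False using assms(1) unfolding ls_pav_output_def by blast
qed

theorem proposition5:
  fixes n :: nat and C :: "'c set" and A :: "nat \<Rightarrow> 'c set" and k :: nat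
    and lam :: real and W :: "'c set"
  assumes "valid_instance n C A k"
    and "\<exists>N'. cohesive_group n A k 1 N'"
    and "0 \<le> lam" and "lam < real n / (real k)^2"
    and "real n > real k * (real k + 1) * (real (max_ejr_degree n C A k) - 1) + lam * (real k)^2"
    and "ls_pav_output n C A k lam W"
  shows "ejr_degree n A k W = max_ejr_degree n C A k"
proof -
  \<comment> \<open>The bounds on lam only make lam-LS-PAV terminate; \<open>ls_pav_output\<close> already
    describes a terminated run.\<close>
  obtain N1 where N1: "cohesive_group n A k 1 N1" using assms(2) by blast
  have fin_C: "finite C" and k: "1 \<le> k" using assms(1) unfolding valid_instance_def by auto
  have W: "committee C k W" using ls_pav_output_committee[OF assms(1,6)] .
  obtain W' where "committee C k W'" and W'_max: "ejr_degree n A k W' = max_ejr_degree n C A k"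
    using max_ejr_degree_attained[OF fin_C W] .
  then have "achieves_ejr_degree n A k W' (max_ejr_degree n C A k)"
    using achieves_ejr_degree_iff_le_ejr_degree[OF N1 k] by simp
  then have "achieves_ejr_degree n A k W (max_ejr_degree n C A k)"
    using stable_committee_achieves_ejr_degree[OF assms(1) W ls_pav_output_stable[OF assms(6)] assms(5)]
    by blast
  then have "max_ejr_degree n C A k \<le> ejr_degree n A k W"
    using achieves_ejr_degree_iff_le_ejr_degree[OF N1 k] by simp
  then show ?thesis using ejr_degree_le_max_ejr_degree[OF fin_C W, of n A] by (rule antisym[rotated])
qed

end
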